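(* Let $(\Gamma,c)$ be a real Fuchsian group and $\gamma\in\Gamma$ an admissible element. Then the twisted centralizer $Z_\gamma$ is either trivial, cyclic of order two, infinite cyclic, or infinite dihedral (i.e. $\mathbf{Z}/2\mathbf{Z}\ltimes\mathbf{Z}$).
   Context: $\mathfrak{h}$ is the upper half-plane. A complex conjugation is an anti-holomorphic involution $c$ of $\mathfrak{h}$; for $\gamma\in\mathrm{PSL}_2(\mathbf{R})$, $\gamma^c=c\gamma c$. A real Fuchsian group is a pair $(\Gamma,c)$ with $\Gamma\subseteq\mathrm{PSL}_2(\mathbf{R})$ discrete, $c$ a complex conjugation, $\Gamma^c=\Gamma$, and $\mathfrak{h}^*/\Gamma$ compact, where $\mathfrak{h}^*$ is $\mathfrak{h}$ with the cusps of $\Gamma$ adjoined. $\gamma\in\Gamma$ is admissible if $\gamma^c=\gamma^{-1}$. The twisted centralizer of $\gamma$ is $Z_\gamma=\{\sigma\in\Gamma:\sigma^c\gamma\sigma^{-1}=\gamma\}$. *)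

theory Defs
  imports "HOL-Analysis.Analysis" "HOL-Algebra.Algebra"
begin

definition uhp :: "complex set" where
  "uhp = {z. 0 < Im z}"

text \<open>An element of PSL_2(R) is represented by the Moebius map it induces on the
  upper half-plane (extended by the identity off the half-plane, so that equality of
  group elements is equality of functions).  The matrices M and -M give the same map.\<close>

definition mob :: "real \<Rightarrow> real \<Rightarrow> real \<Rightarrow> real \<Rightarrow> complex \<Rightarrow> complex" where
  "mob a b c d = (\<lambda>z. if 0 < Im z
      then (of_real a * z + of_real b) / (of_real c * z + of_real d) else z)"

definition PSL2R :: "(complex \<Rightarrow> complex) set" where
  "PSL2R = {mob a b c d | a b c d. a * d - b * c = 1}"

definition PSL2R_group :: "(complex \<Rightarrow> complex) monoid" where
  "PSL2R_group = \<lparr>carrier = PSL2R, monoid.mult = (\<circ>), one = id\<rparr>"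

text \<open>A representing matrix (determined up to sign).\<close>
definition psl_rep :: "(complex \<Rightarrow> complex) \<Rightarrow> real \<times> real \<times> real \<times> real" where
  "psl_rep g = (SOME (a, b, c, d). a * d - b * c = 1 \<and> g = mob a b c d)"

text \<open>Action on the closure of the upper half-plane in the Riemann sphere;
  \<open>None\<close> is the point at infinity.\<close>
definition ext_act :: "(complex \<Rightarrow> complex) \<Rightarrow> complex option \<Rightarrow> complex option" where
  "ext_act g p = (case psl_rep g of (a, b, c, d) \<Rightarrow>
     (case p of
        None \<Rightarrow> (if c = 0 then None else Some (of_real (a / c)))
      | Some z \<Rightarrow> (if 0 < Im z then Some (g z)
                   else if of_real c * z + of_real d = 0 then None
                   else Some ((of_real a * z + of_real b) / (of_real c * z + of_real d)))))"

definition parabolic :: "(complex \<Rightarrow> complex) \<Rightarrow> bool" where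
  "parabolic g \<longleftrightarrow> g \<noteq> id \<and> (case psl_rep g of (a, b, c, d) \<Rightarrow> \<bar>a + d\<bar> = 2)"

definition discrete_psl :: "(complex \<Rightarrow> complex) set \<Rightarrow> bool" where
  "discrete_psl \<Gamma> \<longleftrightarrow> (\<exists>\<epsilon>>0. \<forall>a b c d. a * d - b * c = 1 \<and> mob a b c d \<in> \<Gamma> \<and>
      \<bar>a - 1\<bar> < \<epsilon> \<and> \<bar>b\<bar> < \<epsilon> \<and> \<bar>c\<bar> < \<epsilon> \<and> \<bar>d - 1\<bar> < \<epsilon> \<longrightarrow> mob a b c d = id)"

definition cusps :: "(complex \<Rightarrow> complex) set \<Rightarrow> complex option set" where
  "cusps \<Gamma> = {p. (p = None \<or> (\<exists>x::real. p = Some (of_real x))) \<and>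
                  (\<exists>g\<in>\<Gamma>. parabolic g \<and> ext_act g p = p)}"

definition hstar :: "(complex \<Rightarrow> complex) set \<Rightarrow> complex option set" where
  "hstar \<Gamma> = Some ` uhp \<union> cusps \<Gamma>"

text \<open>The usual (Satake/Shimura) topology on h*: open sets of h, and at a cusp s the
  sets {s} \<union> \<sigma>({Im z > k}) with \<sigma>(\<infinity>) = s.\<close>
definition hstar_topology :: "(complex \<Rightarrow> complex) set \<Rightarrow> complex option topology" where
  "hstar_topology \<Gamma> = topology_generated_by
     ({Some ` U | U. open U \<and> U \<subseteq> uhp} \<union>
      {insert s (Some ` (\<sigma> ` {z. k < Im z})) | s \<sigma> k.
          s \<in> cusps \<Gamma> \<and> \<sigma> \<in> PSL2R \<and> ext_act \<sigma> None = s \<and> 0 < k})"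

definition orbit :: "(complex \<Rightarrow> complex) set \<Rightarrow> complex option \<Rightarrow> complex option set" where
  "orbit \<Gamma> p = {ext_act g p | g. g \<in> \<Gamma>}"

definition compact_quotient :: "(complex \<Rightarrow> complex) set \<Rightarrow> bool" where
  "compact_quotient \<Gamma> \<longleftrightarrow>
     (\<exists>(Y :: complex option set topology) \<pi>. quotient_map (hstar_topology \<Gamma>) Y \<pi> \<and>
        (\<forall>p\<in>hstar \<Gamma>. \<forall>q\<in>hstar \<Gamma>. \<pi> p = \<pi> q \<longleftrightarrow> q \<in> orbit \<Gamma> p) \<and>
        compact_space Y)"

definition complex_conjugation :: "(complex \<Rightarrow> complex) \<Rightarrow> bool" where
  "complex_conjugation c \<longleftrightarrow>
     (\<forall>z\<in>uhp. c z \<in> uhp \<and> c (c z) = z) \<and> (\<lambda>z. cnj (c z)) holomorphic_on uhp"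

definition twist :: "(complex \<Rightarrow> complex) \<Rightarrow> (complex \<Rightarrow> complex) \<Rightarrow> complex \<Rightarrow> complex" where
  "twist c g = (\<lambda>z. if 0 < Im z then c (g (c z)) else z)"

definition real_fuchsian :: "(complex \<Rightarrow> complex) set \<Rightarrow> (complex \<Rightarrow> complex) \<Rightarrow> bool" where
  "real_fuchsian \<Gamma> c \<longleftrightarrow> subgroup \<Gamma> PSL2R_group \<and> discrete_psl \<Gamma> \<and>
     complex_conjugation c \<and> twist c ` \<Gamma> = \<Gamma> \<and> compact_quotient \<Gamma>"

definition admissible :: "(complex \<Rightarrow> complex) \<Rightarrow> (complex \<Rightarrow> complex) \<Rightarrow> bool" where
  "admissible c g \<longleftrightarrow> twist c g = inv\<^bsub>PSL2R_group\<^esub> g"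

definition twisted_centralizer ::
  "(complex \<Rightarrow> complex) set \<Rightarrow> (complex \<Rightarrow> complex) \<Rightarrow> (complex \<Rightarrow> complex) \<Rightarrow> (complex \<Rightarrow> complex) set" where
  "twisted_centralizer \<Gamma> c g = {\<sigma> \<in> \<Gamma>.
      twist c \<sigma> \<otimes>\<^bsub>PSL2R_group\<^esub> g \<otimes>\<^bsub>PSL2R_group\<^esub> inv\<^bsub>PSL2R_group\<^esub> \<sigma> = g}"

text \<open>(n, s) stands for r^n f^s, with f r f = r^-1.\<close>
definition inf_dihedral_group :: "(int \<times> bool) monoid" where
  "inf_dihedral_group = \<lparr>carrier = UNIV,
     monoid.mult = (\<lambda>(a, s) (b, t). (if s then a - b else a + b, s \<noteq> t)),
     one = (0, False)\<rparr>"

end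

(*
  A complex conjugation c has the form c z = - cnj (f z) with f in PSL_2(R): z |-> - cnj (c z) is a
  biholomorphic self-map of the upper half-plane, hence a Moebius map by the Schwarz lemma. So twisting
  by c is, up to conjugation by f, the involution g |-> r g r of PSL_2(R), where r is the reflection in
  the imaginary axis; on matrices it negates the off-diagonal entries. For admissible gamma the element
  eta = f gamma satisfies (r eta r) eta = 1, and every such element factors as eta = (r k r) k^-1.
  Then sigma lies in the twisted centralizer iff k^-1 sigma k commutes with r, i.e. stabilises the
  imaginary axis. This stabiliser is the isometry group of a line, so the twisted centralizer is a
  subgroup of Isom(R) whose translations form a discrete subgroup of R; such a group is trivial,
  of order two, infinite cyclic or infinite dihedral.
*)

theory Submission
  imports Defs "HOL-Complex_Analysis.Complex_Analysis"
begin

definition mobius :: "real \<Rightarrow> real \<Rightarrow> real \<Rightarrow> real \<Rightarrow> complex \<Rightarrow> complex" where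
  "mobius a b c d z = (of_real a * z + of_real b) / (of_real c * z + of_real d)"

lemma mob_eq_mobius: "mob a b c d z = (if 0 < Im z then mobius a b c d z else z)"
  by (simp add: mob_def mobius_def)

lemma mobius_denom_nonzero:
  assumes "a * d - b * c = (1::real)" "0 < Im z"
  shows "of_real c * z + of_real d \<noteq> 0"
proof
  assume h: "of_real c * z + of_real d = 0"
  then have "Im (of_real c * z + of_real d) = 0" by simp
  then have "c = 0" using assms(2) by simp
  with h assms(1) show False by simp
qed

lemma Im_mobius_pos:
  assumes "a * d - b * c = 1" "0 < Im z"
  shows "0 < Im (mobius a b c d z)"
proof -
  have "Im (mobius a b c d z) = (a * d - b * c) * Im z / (cmod (of_real c * z + of_real d))\<^sup>2"
    unfolding mobius_def by (simp add: Im_divide cmod_power2 algebra_simps)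
  then show ?thesis using assms mobius_denom_nonzero[OF assms] by simp
qed

lemma Im_mob_pos: "a * d - b * c = 1 \<Longrightarrow> 0 < Im z \<Longrightarrow> 0 < Im (mob a b c d z)"
  by (simp add: mob_eq_mobius Im_mobius_pos)

lemma mob_in_PSL2R: "a * d - b * c = 1 \<Longrightarrow> mob a b c d \<in> PSL2R"
  unfolding PSL2R_def by blast

lemma mobius_comp:
  assumes "a * d - b * c = 1" "a' * d' - b' * c' = 1" "0 < Im z"
  shows "mobius a b c d (mobius a' b' c' d' z) =
    mobius (a * a' + b * c') (a * b' + b * d') (c * a' + d * c') (c * b' + d * d') z"
proof -
  have n: "of_real c' * z + of_real d' \<noteq> 0" using mobius_denom_nonzero[OF assms(2,3)] .
  have frac: "(A * (N / Dn) + B) / (C * (N / Dn) + D) = (A * N + B * Dn) / (C * N + D * Dn)"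
    if "Dn \<noteq> 0" for A B C D N Dn :: complex
    using that by (simp add: divide_simps)
  show ?thesis
    unfolding mobius_def frac[OF n] by (simp add: algebra_simps)
qed

lemma mob_comp:
  assumes "a * d - b * c = 1" "a' * d' - b' * c' = 1"
  shows "mob a b c d \<circ> mob a' b' c' d' =
    mob (a * a' + b * c') (a * b' + b * d') (c * a' + d * c') (c * b' + d * d')"
  using mobius_comp[OF assms] Im_mobius_pos[OF assms(2)] by (auto simp: mob_eq_mobius)

lemma mob_id: "mob 1 0 0 1 = id"
  by (auto simp: mob_def)

lemma mob_minus: "mob (-a) (-b) (-c) (-d) = mob a b c d"
proof
  fix z :: complex
  have "(- of_real a * z - of_real b) / (- of_real c * z - of_real d)
     = (of_real a * z + of_real b) / (of_real c * z + of_real d)"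
    by (metis minus_add_distrib minus_divide_divide mult_minus_left diff_conv_add_uminus)
  then show "mob (-a) (-b) (-c) (-d) z = mob a b c d z" by (simp add: mob_def)
qed

lemma mob_eq_id_imp:
  assumes "a * d - b * c = 1" "mob a b c d = id"
  shows "b = 0 \<and> c = 0 \<and> d = a \<and> (a = 1 \<or> a = -1)"
proof -
  have fixed: "of_real a * z + of_real b = z * (of_real c * z + of_real d)" if "0 < Im z" for z
    using fun_cong[OF assms(2), of z] mobius_denom_nonzero[OF assms(1) that] that
    by (simp add: mob_eq_mobius mobius_def field_simps)
  have "b = - c" "a = d"
    using fixed[of \<i>] by (simp_all add: complex_eq_iff)
  moreover have "b = - 4 * c"
    using fixed[of "2 * \<i>"] by (simp add: complex_eq_iff)
  ultimately have "b = 0" "c = 0" "a * a = 1" using assms(1) by auto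
  then show ?thesis using \<open>a = d\<close> by (metis square_eq_1_iff power2_eq_square)
qed

lemma mob_inverse_comp:
  assumes "a * d - b * c = 1"
  shows "mob d (-b) (-c) a \<circ> mob a b c d = id" "mob a b c d \<circ> mob d (-b) (-c) a = id"
proof -
  have d: "d * a - (-b) * (-c) = 1" using assms by (simp add: algebra_simps)
  show "mob d (-b) (-c) a \<circ> mob a b c d = id" "mob a b c d \<circ> mob d (-b) (-c) a = id"
    using mob_comp[OF d assms] mob_comp[OF assms d] assms mob_id by (simp_all add: algebra_simps)
qed

lemma PSL2RE:
  assumes "g \<in> PSL2R"
  obtains a b c d where "a * d - b * c = 1" "g = mob a b c d"
  using assms unfolding PSL2R_def by blast

lemma PSL2R_mult [simp]: "x \<otimes>\<^bsub>PSL2R_group\<^esub> y = x \<circ> y"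
  and PSL2R_one [simp]: "\<one>\<^bsub>PSL2R_group\<^esub> = id"
  and PSL2R_carrier [simp]: "carrier PSL2R_group = PSL2R"
  by (simp_all add: PSL2R_group_def)

lemma id_in_PSL2R: "id \<in> PSL2R"
  using mob_in_PSL2R[of 1 1 0 0] mob_id by simp

lemma comp_in_PSL2R:
  assumes "g \<in> PSL2R" "h \<in> PSL2R"
  shows "g \<circ> h \<in> PSL2R"
proof -
  obtain a b c d a' b' c' d' where det: "a * d - b * c = 1" "a' * d' - b' * c' = 1"
    and gh: "g = mob a b c d" "h = mob a' b' c' d'"
    using assms by (auto elim!: PSL2RE)
  have "(a * a' + b * c') * (c * b' + d * d') - (a * b' + b * d') * (c * a' + d * c')
      = (a * d - b * c) * (a' * d' - b' * c')" by (simp add: algebra_simps)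
  then show ?thesis
    using det unfolding gh by (simp add: mob_comp mob_in_PSL2R)
qed

lemma group_PSL2R: "group PSL2R_group"
proof (rule groupI)
  fix x assume "x \<in> carrier PSL2R_group"
  then obtain a b c d where x: "a * d - b * c = 1" "x = mob a b c d"
    by (auto elim: PSL2RE)
  have "d * a - (-b) * (-c) = 1" using x by (simp add: algebra_simps)
  then show "\<exists>y\<in>carrier PSL2R_group. y \<otimes>\<^bsub>PSL2R_group\<^esub> x = \<one>\<^bsub>PSL2R_group\<^esub>"
    using mob_inverse_comp[OF x(1)] x(2) by (auto intro!: bexI[of _ "mob d (-b) (-c) a"] mob_in_PSL2R)
qed (auto simp: comp_in_PSL2R id_in_PSL2R o_assoc)

interpretation PSL2R: group PSL2R_group
  by (rule group_PSL2R)

lemma inv_mob: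
  assumes "a * d - b * c = 1"
  shows "inv\<^bsub>PSL2R_group\<^esub> (mob a b c d) = mob d (-b) (-c) a"
proof -
  have "d * a - (-b) * (-c) = 1" using assms by (simp add: algebra_simps)
  then show ?thesis
    using mob_inverse_comp[OF assms] mob_in_PSL2R[OF assms]
    by (intro PSL2R.inv_equality) (auto intro: mob_in_PSL2R)
qed

lemma mob_eq_imp:
  assumes det: "a * d - b * c = 1" "a' * d' - b' * c' = 1"
    and eq: "mob a b c d = mob a' b' c' d'"
  shows "(a = a' \<and> b = b' \<and> c = c' \<and> d = d') \<or> (a = -a' \<and> b = -b' \<and> c = -c' \<and> d = -d')"
proof -
  have d': "d' * a' - (-b') * (-c') = 1" using det by (simp add: algebra_simps)
  define p q r s where "p = d' * a - b' * c" and "q = d' * b - b' * d"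
    and "r = a' * c - c' * a" and "s = a' * d - c' * b"
  have dp: "p * s - q * r = 1"
  proof -
    have "p * s - q * r = (a * d - b * c) * (d' * a' - (-b') * (-c'))"
      unfolding p_def q_def r_def s_def by (simp add: algebra_simps)
    then show ?thesis using det d' by simp
  qed
  have "mob p q r s = mob d' (-b') (-c') a' \<circ> mob a b c d"
    using mob_comp[OF d' det(1)] unfolding p_def q_def r_def s_def by (simp add: algebra_simps)
  also have "\<dots> = id" using eq mob_inverse_comp[OF det(2)] by simp
  finally have "q = 0 \<and> r = 0 \<and> s = p \<and> (p = 1 \<or> p = -1)" using mob_eq_id_imp[OF dp] by blast
  moreover have "a = a' * p + b' * r" "b = a' * q + b' * s" "c = c' * p + d' * r" "d = c' * q + d' * s"
  proof -
    have "a' * p + b' * r = a * (a' * d' - b' * c')" "a' * q + b' * s = b * (a' * d' - b' * c')"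
      "c' * p + d' * r = c * (a' * d' - b' * c')" "c' * q + d' * s = d * (a' * d' - b' * c')"
      unfolding p_def q_def r_def s_def by (simp_all add: algebra_simps)
    then show "a = a' * p + b' * r" "b = a' * q + b' * s" "c = c' * p + d' * r" "d = c' * q + d' * s"
      using det(2) by simp_all
  qed
  ultimately show ?thesis by auto
qed

subsection \<open>Holomorphic automorphisms of the upper half-plane\<close>

definition cayley :: "complex \<Rightarrow> complex" where
  "cayley z = (z - \<i>) / (z + \<i>)"

definition inv_cayley :: "complex \<Rightarrow> complex" where
  "inv_cayley w = \<i> * (1 + w) / (1 - w)"

lemma plus_i_nonzero:
  assumes "0 < Im z"
  shows "z + \<i> \<noteq> 0"
proof
  assume "z + \<i> = 0"
  then have "Im (z + \<i>) = 0" by simp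
  with assms show False by simp
qed

lemma cayley_in_ball:
  assumes "0 < Im z"
  shows "cayley z \<in> ball 0 1"
proof -
  have "(Im z - 1)\<^sup>2 < (Im z + 1)\<^sup>2"
    using assms by (simp add: power2_eq_square algebra_simps)
  then have "(cmod (z - \<i>))\<^sup>2 < (cmod (z + \<i>))\<^sup>2"
    by (simp add: cmod_power2)
  then have "cmod (z - \<i>) < cmod (z + \<i>)" by (simp add: power_less_imp_less_base)
  then show ?thesis using plus_i_nonzero[OF assms] by (simp add: cayley_def norm_divide divide_less_eq)
qed

lemma Im_inv_cayley_pos:
  assumes "w \<in> ball 0 1"
  shows "0 < Im (inv_cayley w)"
proof -
  have n: "cmod w < 1" using assms by simp
  then have nz: "1 - w \<noteq> 0" by auto
  have "Im (inv_cayley w) = (1 - ((Re w)\<^sup>2 + (Im w)\<^sup>2)) / ((1 - Re w)\<^sup>2 + (Im w)\<^sup>2)"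
    using nz by (simp add: inv_cayley_def Im_divide algebra_simps power2_eq_square)
  moreover have "(Re w)\<^sup>2 + (Im w)\<^sup>2 < 1"
    using power_strict_mono[OF n, of 2] by (simp add: cmod_power2)
  moreover have "0 < (1 - Re w)\<^sup>2 + (Im w)\<^sup>2"
  proof -
    have "0 < (cmod (1 - w))\<^sup>2" using nz by simp
    then show ?thesis by (simp add: cmod_power2)
  qed
  ultimately show ?thesis by simp
qed

lemma inv_cayley_cayley:
  assumes "0 < Im z"
  shows "inv_cayley (cayley z) = z"
proof -
  have "\<i> * z * 2 - 2 \<noteq> 0"
  proof
    assume "\<i> * z * 2 - 2 = 0"
    then have "Re (\<i> * z * 2 - 2) = 0" by simp
    then show False using assms by simp
  qed
  moreover have "\<i> * (z * (z * 2)) - z * 2 = z * (\<i> * z * 2 - 2)" by (simp add: algebra_simps)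
  ultimately show ?thesis
    using plus_i_nonzero[OF assms] by (simp add: inv_cayley_def cayley_def field_simps)
qed

lemma cayley_inv_cayley:
  assumes "w \<in> ball 0 1"
  shows "cayley (inv_cayley w) = w"
proof -
  have "1 - w \<noteq> 0" using assms by auto
  then show ?thesis by (simp add: inv_cayley_def cayley_def field_simps)
qed

lemma holomorphic_cayley: "cayley holomorphic_on uhp"
  unfolding cayley_def uhp_def by (intro holomorphic_intros) (use plus_i_nonzero in auto)

lemma holomorphic_inv_cayley: "inv_cayley holomorphic_on ball 0 1"
  unfolding inv_cayley_def by (intro holomorphic_intros) auto

lemma inv_cayley_rotation:
  assumes uv: "u\<^sup>2 + v\<^sup>2 = 1" and z: "0 < Im z"
  shows "inv_cayley ((Complex u v)\<^sup>2 * cayley z) = mobius u v (-v) u z"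
proof -
  define \<beta> where "\<beta> = Complex u v"
  have nz: "z + \<i> \<noteq> 0" using z by (rule plus_i_nonzero)
  have num: "\<i> * ((z + \<i>) + \<beta>\<^sup>2 * (z - \<i>)) = 2 * \<i> * \<beta> * (of_real u * z + of_real v)"
    unfolding \<beta>_def using uv
    by (simp add: complex_eq_iff power2_eq_square algebra_simps) (safe; Groebner_Basis.algebra)
  have den: "(z + \<i>) - \<beta>\<^sup>2 * (z - \<i>) = 2 * \<i> * \<beta> * (of_real (-v) * z + of_real u)"
    unfolding \<beta>_def using uv
    by (simp add: complex_eq_iff power2_eq_square algebra_simps) (safe; Groebner_Basis.algebra)
  have "\<beta> \<noteq> 0" using uv by (auto simp: \<beta>_def complex_eq_iff)
  have "1 + \<beta>\<^sup>2 * cayley z = ((z + \<i>) + \<beta>\<^sup>2 * (z - \<i>)) / (z + \<i>)"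
    "1 - \<beta>\<^sup>2 * cayley z = ((z + \<i>) - \<beta>\<^sup>2 * (z - \<i>)) / (z + \<i>)"
    using nz unfolding cayley_def by (simp_all add: field_simps)
  then have "inv_cayley (\<beta>\<^sup>2 * cayley z) = \<i> * ((z + \<i>) + \<beta>\<^sup>2 * (z - \<i>)) / ((z + \<i>) - \<beta>\<^sup>2 * (z - \<i>))"
    using nz unfolding inv_cayley_def by simp
  also have "\<dots> = mobius u v (-v) u z"
    unfolding num den mobius_def using \<open>\<beta> \<noteq> 0\<close> by simp
  finally show ?thesis by (simp add: \<beta>_def)
qed

text \<open>Transported to the disc by the Cayley transform, \<open>F\<close> fixes \<open>0\<close>, and the Schwarz lemma applied
  to it and to its inverse makes it a rotation.\<close>

lemma uhp_automorphism_fixing_i: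
  assumes holF: "F holomorphic_on uhp" and F: "\<And>z. 0 < Im z \<Longrightarrow> 0 < Im (F z)"
    and holG: "G holomorphic_on uhp" and G: "\<And>z. 0 < Im z \<Longrightarrow> 0 < Im (G z)"
    and GF: "\<And>z. 0 < Im z \<Longrightarrow> G (F z) = z" and Fi: "F \<i> = \<i>"
  shows "\<exists>u v. u\<^sup>2 + v\<^sup>2 = 1 \<and> (\<forall>z. 0 < Im z \<longrightarrow> F z = mobius u v (-v) u z)"
proof -
  define D where "D = cayley \<circ> F \<circ> inv_cayley"
  define E where "E = cayley \<circ> G \<circ> inv_cayley"
  have into_uhp: "inv_cayley ` ball 0 1 \<subseteq> uhp" "F ` uhp \<subseteq> uhp" "G ` uhp \<subseteq> uhp"
    using Im_inv_cayley_pos F G by (auto simp: uhp_def)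
  have holD: "D holomorphic_on ball 0 1"
    unfolding D_def by (rule holomorphic_on_compose_gen[OF holomorphic_inv_cayley
      holomorphic_on_compose_gen[OF holF holomorphic_cayley into_uhp(2)] into_uhp(1)])
  have holE: "E holomorphic_on ball 0 1"
    unfolding E_def by (rule holomorphic_on_compose_gen[OF holomorphic_inv_cayley
      holomorphic_on_compose_gen[OF holG holomorphic_cayley into_uhp(3)] into_uhp(1)])
  have i0: "inv_cayley 0 = \<i>" "cayley \<i> = 0" by (simp_all add: inv_cayley_def cayley_def)
  have D0: "D 0 = 0" and E0: "E 0 = 0"
    using GF[of \<i>] by (simp_all add: D_def E_def i0 Fi)
  have Dball: "norm (D z) < 1" and Eball: "norm (E z) < 1" if "norm z < 1" for z
    using cayley_in_ball[OF F[OF Im_inv_cayley_pos]] cayley_in_ball[OF G[OF Im_inv_cayley_pos]] that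
    by (simp_all add: D_def E_def)
  have ED: "E (D z) = z" if "norm z < 1" for z
    using that GF[OF Im_inv_cayley_pos, of z] inv_cayley_cayley[OF F[OF Im_inv_cayley_pos], of z]
      cayley_inv_cayley[of z] by (simp add: D_def E_def)
  define h :: complex where "h = 1/2"
  have h: "norm h < 1" "h \<noteq> 0" by (simp_all add: h_def)
  have "norm (D h) \<le> norm h" by (rule Schwarz_Lemma(1)[OF holD D0 Dball h(1)])
  moreover have "norm (E (D h)) \<le> norm (D h)"
    by (rule Schwarz_Lemma(1)[OF holE E0 Eball]) (use Dball h in auto)
  ultimately have "norm (D h) = norm h" using ED[OF h(1)] by simp
  then obtain \<alpha> where \<alpha>: "\<And>z. norm z < 1 \<Longrightarrow> D z = \<alpha> * z" and "norm \<alpha> = 1"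
    using Schwarz_Lemma(3)[OF holD D0 Dball h(1)] h by blast
  define u v where "u = Re (csqrt \<alpha>)" and "v = Im (csqrt \<alpha>)"
  have sq: "(Complex u v)\<^sup>2 = \<alpha>" unfolding u_def v_def complex.collapse by (rule power2_csqrt)
  have "norm (csqrt \<alpha>) = 1" using \<open>norm \<alpha> = 1\<close> by simp
  then have uv: "u\<^sup>2 + v\<^sup>2 = 1" by (simp add: u_def v_def cmod_def)
  have "F z = mobius u v (-v) u z" if "0 < Im z" for z
  proof -
    have "cayley (F z) = \<alpha> * cayley z"
      using \<alpha>[of "cayley z"] cayley_in_ball[OF that] inv_cayley_cayley[OF that] by (simp add: D_def)
    then show ?thesis
      using inv_cayley_cayley[OF F[OF that]] inv_cayley_rotation[OF uv that] sq by simp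
  qed
  then show ?thesis using uv by blast
qed

lemma uhp_automorphism_is_mob:
  assumes holF: "F holomorphic_on uhp" and F: "\<And>z. 0 < Im z \<Longrightarrow> 0 < Im (F z)"
    and holG: "G holomorphic_on uhp" and G: "\<And>z. 0 < Im z \<Longrightarrow> 0 < Im (G z)"
    and GF: "\<And>z. 0 < Im z \<Longrightarrow> G (F z) = z"
  shows "\<exists>a b c d. a * d - b * c = 1 \<and> (\<forall>z. 0 < Im z \<longrightarrow> F z = mob a b c d z)"
proof -
  define x y where "x = Re (F \<i>)" and "y = Im (F \<i>)"
  have y: "0 < y" using F[of \<i>] by (simp add: y_def)
  define F1 where "F1 z = (F z - of_real x) / of_real y" for z
  define G1 where "G1 z = G (of_real x + of_real y * z)" for z
  have F1: "0 < Im (F1 z)" if "0 < Im z" for z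
    using F[OF that] y by (simp add: F1_def)
  have G1: "0 < Im (G1 z)" if "0 < Im z" for z
    using G[of "of_real x + of_real y * z"] that y by (simp add: G1_def)
  have G1F1: "G1 (F1 z) = z" if "0 < Im z" for z
  proof -
    have "of_real x + of_real y * F1 z = F z" using y by (simp add: F1_def)
    then show ?thesis using GF[OF that] by (simp add: G1_def)
  qed
  have holF1: "F1 holomorphic_on uhp"
    unfolding F1_def using y by (intro holomorphic_intros holF) auto
  have "(G \<circ> (\<lambda>z. of_real x + of_real y * z)) holomorphic_on uhp"
    by (rule holomorphic_on_compose_gen[OF _ holG])
      (use y in \<open>auto intro!: holomorphic_intros simp: uhp_def\<close>)
  then have holG1: "G1 holomorphic_on uhp" by (simp add: G1_def[abs_def] o_def)
  have "F1 \<i> = \<i>" using y by (simp add: F1_def x_def y_def complex_eq_iff)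
  then obtain u v where uv: "u\<^sup>2 + v\<^sup>2 = 1" and F1_rot: "\<And>z. 0 < Im z \<Longrightarrow> F1 z = mobius u v (-v) u z"
    using uhp_automorphism_fixing_i[OF holF1 F1 holG1 G1 G1F1] by blast
  define s where "s = sqrt y"
  have s: "0 < s" "s * s = y" using y by (simp_all add: s_def)
  define a b c d where "a = (y * u - x * v) / s" and "b = (x * u + y * v) / s"
    and "c = - v / s" and "d = u / s"
  have det: "a * d - b * c = 1"
  proof -
    have "a * d - b * c = y * (u\<^sup>2 + v\<^sup>2) / (s * s)"
      using s(1) by (simp add: a_def b_def c_def d_def field_simps power2_eq_square)
    then show ?thesis using uv s y by simp
  qed
  have "F z = mob a b c d z" if "0 < Im z" for z
  proof -
    have "of_real (-v) * z + of_real u \<noteq> 0"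
      using mobius_denom_nonzero[of u u v "-v" z] uv that by (simp add: power2_eq_square)
    then have "of_real x + of_real y * mobius u v (-v) u z = mobius a b c d z"
      using s(1) unfolding mobius_def a_def b_def c_def d_def by (simp add: field_simps of_real_divide)
    moreover have "F z = of_real x + of_real y * mobius u v (-v) u z"
      using F1_rot[OF that, symmetric] y by (simp add: F1_def)
    ultimately show ?thesis using that by (simp add: mob_eq_mobius)
  qed
  then show ?thesis using det by blast
qed

subsection \<open>Complex conjugations\<close>

definition mirror :: "(complex \<Rightarrow> complex) \<Rightarrow> complex \<Rightarrow> complex" where
  "mirror g z = (if 0 < Im z then - cnj (g (- cnj z)) else z)"

lemma mirror_mob: "mirror (mob a b c d) = mob a (-b) (-c) d"
proof
  fix z :: complex
  have "cnj ((of_real a * (- cnj z) + of_real b) / (of_real c * (- cnj z) + of_real d))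
      = (of_real a * (- z) + of_real b) / (of_real c * (- z) + of_real d)"
    by (simp add: complex_cnj_divide)
  moreover have "- ((of_real a * (- z) + of_real b) / (of_real c * (- z) + of_real d))
      = (of_real a * z + of_real (-b)) / (of_real (-c) * z + of_real d)"
  proof -
    have "-(of_real a * (- z) + of_real b) = of_real a * z + of_real (-b)"
      "of_real c * (- z) + of_real d = of_real (-c) * z + of_real d" by simp_all
    then show ?thesis by (metis minus_divide_left)
  qed
  ultimately show "mirror (mob a b c d) z = mob a (-b) (-c) d z"
    by (simp add: mirror_def mob_def)
qed

lemma Im_PSL2R_pos: "g \<in> PSL2R \<Longrightarrow> 0 < Im z \<Longrightarrow> 0 < Im (g z)"
  by (erule PSL2RE) (simp add: Im_mob_pos)

lemma PSL2R_outside_uhp: "g \<in> PSL2R \<Longrightarrow> \<not> 0 < Im z \<Longrightarrow> g z = z"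
  by (erule PSL2RE) (simp add: mob_def)

lemma mirror_in_PSL2R: "g \<in> PSL2R \<Longrightarrow> mirror g \<in> PSL2R"
  by (erule PSL2RE) (simp add: mirror_mob mob_in_PSL2R)

lemma mirror_comp: "h \<in> PSL2R \<Longrightarrow> mirror (g \<circ> h) = mirror g \<circ> mirror h"
  by (rule ext) (simp add: mirror_def Im_PSL2R_pos)

lemma mirror_hom: "mirror \<in> hom PSL2R_group PSL2R_group"
  by (rule homI) (simp_all add: mirror_in_PSL2R mirror_comp)

lemma twist_eq_mirror:
  assumes c: "\<And>z. 0 < Im z \<Longrightarrow> c z = - cnj (f z)" and "f \<in> PSL2R" "g \<in> PSL2R"
  shows "twist c g = mirror f \<circ> mirror g \<circ> f"
proof
  fix z :: complex
  show "twist c g z = (mirror f \<circ> mirror g \<circ> f) z"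
  proof (cases "0 < Im z")
    case True
    then have "0 < Im (c z)" using c Im_PSL2R_pos[OF \<open>f \<in> PSL2R\<close>] by simp
    then show ?thesis
      using True c Im_PSL2R_pos[OF \<open>g \<in> PSL2R\<close>] Im_PSL2R_pos[OF \<open>f \<in> PSL2R\<close>]
      by (simp add: twist_def mirror_def)
  next
    case False
    then show ?thesis using PSL2R_outside_uhp[OF \<open>f \<in> PSL2R\<close>] by (simp add: mirror_def twist_def)
  qed
qed

text \<open>\<open>z \<mapsto> - cnj (c z)\<close> is a biholomorphic self-map of the upper half-plane.\<close>

lemma complex_conjugation_eq_reflection_comp:
  assumes "complex_conjugation c"
  shows "\<exists>f\<in>PSL2R. \<forall>z. 0 < Im z \<longrightarrow> c z = - cnj (f z)"
proof -
  have c: "0 < Im (c z)" "c (c z) = z" if "0 < Im z" for z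
    using assms that unfolding complex_conjugation_def uhp_def by auto
  define F where "F z = - cnj (c z)" for z
  have holF: "F holomorphic_on uhp"
    using assms unfolding F_def complex_conjugation_def by (intro holomorphic_intros) auto
  have F: "0 < Im (F z)" if "0 < Im z" for z using c[OF that] by (simp add: F_def)
  have "inj_on F uhp"
  proof (rule inj_onI)
    fix z w assume "z \<in> uhp" "w \<in> uhp" "F z = F w"
    then show "z = w" using c(2) unfolding F_def uhp_def by (metis complex_cnj_cnj mem_Collect_eq neg_equal_iff_equal)
  qed
  moreover have "open uhp" unfolding uhp_def using open_halfspace_Im_gt[of 0] by simp
  ultimately obtain G where holG: "G holomorphic_on F ` uhp" and GF: "\<And>z. z \<in> uhp \<Longrightarrow> G (F z) = z"
    using holomorphic_has_inverse[OF holF] by metis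
  have F_onto: "F ` uhp = uhp"
  proof
    show "uhp \<subseteq> F ` uhp"
    proof
      fix w assume "w \<in> uhp"
      then have w: "0 < Im (- cnj w)" by (simp add: uhp_def)
      then have "F (c (- cnj w)) = w" using c(2)[OF w] by (simp add: F_def)
      moreover have "c (- cnj w) \<in> uhp" using c(1)[OF w] by (simp add: uhp_def)
      ultimately show "w \<in> F ` uhp" by (metis image_eqI)
    qed
  qed (use F in \<open>auto simp: uhp_def\<close>)
  have G: "0 < Im (G w)" if "0 < Im w" for w
  proof -
    have "w \<in> F ` uhp" using that F_onto by (simp add: uhp_def)
    then show ?thesis using GF by (auto simp: uhp_def)
  qed
  have holG': "G holomorphic_on uhp" using holG F_onto by simp
  have GF': "G (F z) = z" if "0 < Im z" for z using GF that by (simp add: uhp_def)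
  obtain a b c' d where det: "a * d - b * c' = 1"
    and Fm: "\<And>z. 0 < Im z \<Longrightarrow> F z = mob a b c' d z"
    using uhp_automorphism_is_mob[OF holF F holG' G GF'] by blast
  have "c z = - cnj (mob a b c' d z)" if "0 < Im z" for z
    using Fm[OF that, symmetric] by (simp add: F_def)
  then show ?thesis using mob_in_PSL2R[OF det] by blast
qed

lemma complex_conjugation_twist:
  assumes "complex_conjugation c"
  obtains f where "f \<in> PSL2R" "mirror f = inv\<^bsub>PSL2R_group\<^esub> f"
    "\<And>g. g \<in> PSL2R \<Longrightarrow> twist c g = inv\<^bsub>PSL2R_group\<^esub> f \<circ> mirror g \<circ> f"
proof -
  obtain f where f: "f \<in> PSL2R" and c: "\<And>z. 0 < Im z \<Longrightarrow> c z = - cnj (f z)"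
    using complex_conjugation_eq_reflection_comp[OF assms] by blast
  have "twist c id = id"
  proof
    fix z
    have "c (c z) = z" if "0 < Im z" using assms that unfolding complex_conjugation_def uhp_def by auto
    then show "twist c id z = id z" by (simp add: twist_def)
  qed
  moreover have "mirror id = id" by (rule ext) (simp add: mirror_def)
  ultimately have "mirror f \<circ> f = id"
    using twist_eq_mirror[OF c f id_in_PSL2R] by simp
  then have "mirror f = inv\<^bsub>PSL2R_group\<^esub> f"
    using f mirror_in_PSL2R[OF f] by (intro PSL2R.inv_equality [symmetric]) auto
  with f show ?thesis
    by (intro that) (simp_all add: twist_eq_mirror[OF c f])
qed

subsection \<open>The twisted centralizer as a conjugate of the normalizer of the diagonal\<close>

lemma (in group) twisted_conj_eq_iff:
  assumes "f \<in> carrier G" "g \<in> carrier G" "s \<in> carrier G" "t \<in> carrier G"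
  shows "inv f \<otimes> t \<otimes> f \<otimes> g \<otimes> inv s = g \<longleftrightarrow> t \<otimes> (f \<otimes> g) = f \<otimes> g \<otimes> s"
proof -
  have "inv f \<otimes> t \<otimes> f \<otimes> g \<otimes> inv s = g \<longleftrightarrow> inv f \<otimes> (t \<otimes> f \<otimes> g) = g \<otimes> s"
    using assms inv_solve_right'[of g "inv f \<otimes> t \<otimes> f \<otimes> g" s] by (simp add: m_assoc)
  also have "\<dots> \<longleftrightarrow> t \<otimes> (f \<otimes> g) = f \<otimes> g \<otimes> s"
    using assms inv_solve_left'[of "g \<otimes> s" f "t \<otimes> f \<otimes> g"] by (simp add: m_assoc)
  finally show ?thesis .
qed

lemma (in group) commute_coboundary_iff:
  assumes "k \<in> carrier G" "s \<in> carrier G" "t \<in> carrier G" "u \<in> carrier G"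
  shows "t \<otimes> (u \<otimes> inv k) = u \<otimes> inv k \<otimes> s \<longleftrightarrow> inv u \<otimes> t \<otimes> u = inv k \<otimes> s \<otimes> k"
proof -
  have "t \<otimes> (u \<otimes> inv k) = u \<otimes> inv k \<otimes> s \<longleftrightarrow> t \<otimes> u = u \<otimes> (inv k \<otimes> s \<otimes> k)"
    using assms inv_solve_right'[of "u \<otimes> inv k \<otimes> s" "t \<otimes> u" k] by (simp add: m_assoc)
  also have "\<dots> \<longleftrightarrow> inv u \<otimes> t \<otimes> u = inv k \<otimes> s \<otimes> k"
    using assms inv_solve_left'[of "inv k \<otimes> s \<otimes> k" u "t \<otimes> u"] by (simp add: m_assoc)
  finally show ?thesis .
qed

lemma (in group) inv_conj_eq_iff:
  assumes "k \<in> carrier G" "s \<in> carrier G" "d \<in> carrier G"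
  shows "inv k \<otimes> s \<otimes> k = d \<longleftrightarrow> s = k \<otimes> d \<otimes> inv k"
  using assms inv_solve_left'[of "d \<otimes> inv k" k s] inv_solve_right'[of d "inv k \<otimes> s" "inv k"]
  by (simp add: m_assoc)

lemma mirror_comp_self_id_imp_diag_eq:
  assumes det: "a * d - b * c = 1" and inv: "mirror (mob a b c d) \<circ> mob a b c d = id"
  shows "a = d"
proof (rule ccontr)
  assume "a \<noteq> d"
  have det': "a * d - (-b) * (-c) = 1" using det by simp
  have "(a * a + (-b) * c) * ((-c) * b + d * d) - (a * b + (-b) * d) * ((-c) * a + d * c)
      = (a * d - b * c) * (a * d - b * c)" by (simp add: algebra_simps)
  then have det2: "(a * a + (-b) * c) * ((-c) * b + d * d) - (a * b + (-b) * d) * ((-c) * a + d * c) = 1"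
    using det by simp
  have "mob (a * a + (-b) * c) (a * b + (-b) * d) ((-c) * a + d * c) ((-c) * b + d * d) = id"
    using inv mob_comp[OF det' det] by (simp add: mirror_mob)
  then have "b * (a - d) = 0" "c * (a - d) = 0" "(a - d) * (a + d) = 0"
    using mob_eq_id_imp[OF det2] by (auto simp: algebra_simps)
  then have "b = 0" "c = 0" "a = - d" using \<open>a \<noteq> d\<close> by auto
  then have "- (d * d) = 1" using det by simp
  then show False by (smt (verit) zero_le_square)
qed

text \<open>The entries of \<open>mirror k \<circ> inv k\<close> for \<open>k = mob x y z w\<close>.\<close>

lemma equal_diagonal_factorization:
  fixes A B C :: real
  assumes h: "A * A - B * C = 1"
  shows "\<exists>x y z w e. x * w - y * z = 1 \<and> (e = 1 \<or> e = -1) \<and>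
     A = e * (x * w + y * z) \<and> B = e * (-2 * x * y) \<and> C = e * (-2 * z * w)"
proof (cases "B = 0")
  case True
  then have "A * A = 1" using h by simp
  then have "A = 1 \<or> A = -1" using square_eq_1_iff[of A] by (simp add: power2_eq_square)
  then show ?thesis
    using True by (intro exI[of _ 1] exI[of _ 0] exI[of _ "- A * C / 2"] exI[of _ 1] exI[of _ A]) auto
next
  case False
  define e :: real where "e = (if 0 \<le> A then 1 else -1)"
  have e: "e * e = 1" "e = 1 \<or> e = -1" by (simp_all add: e_def)
  define y where "y = - e * B / 2"
  have "y \<noteq> 0" using False by (simp add: y_def e_def)
  define w z where "w = (e * A + 1) / 2" and "z = (e * A - 1) / (2 * y)"
  have "1 * w - y * z = 1" "A = e * (1 * w + y * z)"
    using \<open>y \<noteq> 0\<close> e by (simp_all add: w_def z_def field_simps)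
  moreover have "B = e * (-2 * 1 * y)" using e by (simp add: y_def)
  moreover have "C = e * (-2 * z * w)"
  proof -
    have "e * (-2 * z * w) = - e * ((e * A) * (e * A) - 1) / (2 * y)"
      using \<open>y \<noteq> 0\<close> by (simp add: w_def z_def field_simps)
    also have "(e * A) * (e * A) = A * A" using e(2) by (elim disjE) simp_all
    also have "A * A - 1 = B * C" using h by simp
    also have "- e * (B * C) / (2 * y) = C" using False e(2) by (elim disjE) (simp_all add: y_def)
    finally show ?thesis by simp
  qed
  ultimately show ?thesis using e(2) by blast
qed

lemma mirror_cocycle_eq_coboundary:
  assumes g: "g \<in> PSL2R" and inv: "mirror g \<circ> g = id"
  obtains k where "k \<in> PSL2R" "g = mirror k \<circ> inv\<^bsub>PSL2R_group\<^esub> k"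
proof -
  obtain A B C D where det: "A * D - B * C = 1" and gm: "g = mob A B C D"
    using g by (rule PSL2RE)
  have "A = D" using mirror_comp_self_id_imp_diag_eq[OF det] inv gm by simp
  then have "A * A - B * C = 1" using det by simp
  from equal_diagonal_factorization[OF this] obtain x y z w e where dk: "x * w - y * z = 1"
    and e: "e = 1 \<or> e = -1"
    and ABC: "A = e * (x * w + y * z)" "B = e * (-2 * x * y)" "C = e * (-2 * z * w)"
    by blast
  have d1: "x * w - (-y) * (-z) = 1" and d2: "w * x - (-y) * (-z) = 1"
    using dk by (simp_all add: algebra_simps)
  have "mirror (mob x y z w) \<circ> inv\<^bsub>PSL2R_group\<^esub> (mob x y z w)
      = mob (x * w + y * z) (-2 * x * y) (-2 * z * w) (x * w + y * z)"
    unfolding mirror_mob inv_mob[OF dk] mob_comp[OF d1 d2] by (simp add: algebra_simps)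
  also have "\<dots> = g"
    using e
  proof
    assume "e = -1"
    then show ?thesis
      using ABC \<open>A = D\<close> gm mob_minus[of "x * w + y * z" "-2 * x * y" "-2 * z * w" "x * w + y * z"]
      by simp
  qed (use ABC \<open>A = D\<close> gm in simp)
  finally show ?thesis using that mob_in_PSL2R[OF dk] by blast
qed

text \<open>The isometry group of the real line; \<open>(x, s)\<close> stands for \<open>t \<mapsto> x + (if s then -t else t)\<close>.\<close>

definition real_dihedral_group :: "(real \<times> bool) monoid" where
  "real_dihedral_group = \<lparr>carrier = UNIV,
     monoid.mult = (\<lambda>(a, s) (b, t). (if s then a - b else a + b, s \<noteq> t)),
     one = (0, False)\<rparr>"

lemma real_dihedral_mult [simp]:
    "(a, s) \<otimes>\<^bsub>real_dihedral_group\<^esub> (b, t) = (if s then a - b else a + b, s \<noteq> t)"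
  and real_dihedral_one [simp]: "\<one>\<^bsub>real_dihedral_group\<^esub> = (0, False)"
  and real_dihedral_carrier [simp]: "carrier real_dihedral_group = UNIV"
  by (simp_all add: real_dihedral_group_def)

lemma group_real_dihedral: "group real_dihedral_group"
proof (rule groupI)
  fix x :: "real \<times> bool"
  show "\<exists>y\<in>carrier real_dihedral_group. y \<otimes>\<^bsub>real_dihedral_group\<^esub> x = \<one>\<^bsub>real_dihedral_group\<^esub>"
  proof (cases x)
    case (Pair a s)
    show ?thesis by (rule bexI[of _ "if s then (a, True) else (- a, False)"]) (auto simp: Pair)
  qed
qed (auto simp: real_dihedral_group_def)

text \<open>The stabiliser of the imaginary axis: \<open>z \<mapsto> e\<^sup>2\<^sup>x z\<close> and \<open>z \<mapsto> -e\<^sup>2\<^sup>x / z\<close>.\<close>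

definition diag_normalizer :: "real \<times> bool \<Rightarrow> complex \<Rightarrow> complex" where
  "diag_normalizer = (\<lambda>(x, s). if s then mob 0 (exp x) (- 1 / exp x) 0 else mob (exp x) 0 0 (1 / exp x))"

lemma diag_normalizer_in_PSL2R: "diag_normalizer p \<in> PSL2R"
  by (cases p) (auto simp: diag_normalizer_def intro!: mob_in_PSL2R)

lemma mirror_diag_normalizer: "mirror (diag_normalizer p) = diag_normalizer p"
  using mob_minus[of 0 "exp (fst p)" "- 1 / exp (fst p)" 0]
  by (cases p) (auto simp: diag_normalizer_def mirror_mob)

lemma diag_normalizer_mult:
  "diag_normalizer p \<circ> diag_normalizer q = diag_normalizer (p \<otimes>\<^bsub>real_dihedral_group\<^esub> q)"
proof -
  obtain x s y t where pq: "p = (x, s)" "q = (y, t)" by (cases p, cases q)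
  define u v where "u = exp x" and "v = exp y"
  have uv: "0 < u" "0 < v" "exp (x - y) = u / v" "exp (x + y) = u * v"
    by (simp_all add: u_def v_def exp_diff exp_add)
  have "mob 0 u (- 1 / u) 0 \<circ> mob 0 v (- 1 / v) 0 = mob (u / v) 0 0 (v / u)"
    using mob_comp[of 0 0 u "- 1 / u" 0 0 v "- 1 / v"] mob_minus[of "u / v" 0 0 "v / u"] uv
    by simp
  moreover have "mob 0 u (- 1 / u) 0 \<circ> mob v 0 0 (1 / v) = mob 0 (u / v) (- 1 / (u / v)) 0"
    using mob_comp[of 0 0 u "- 1 / u" v "1 / v" 0 0] uv by simp
  moreover have "mob u 0 0 (1 / u) \<circ> mob 0 v (- 1 / v) 0 = mob 0 (u * v) (- 1 / (u * v)) 0"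
    using mob_comp[of u "1 / u" 0 0 0 0 v "- 1 / v"] uv by simp
  moreover have "mob u 0 0 (1 / u) \<circ> mob v 0 0 (1 / v) = mob (u * v) 0 0 (1 / (u * v))"
    using mob_comp[of u "1 / u" 0 0 v "1 / v" 0 0] uv by simp
  ultimately show ?thesis
    by (cases s; cases t) (simp_all add: pq diag_normalizer_def uv u_def [symmetric] v_def [symmetric])
qed

lemma inj_diag_normalizer: "inj diag_normalizer"
proof (rule injI)
  fix p q assume eq: "diag_normalizer p = diag_normalizer q"
  obtain x s y t where pq: "p = (x, s)" "q = (y, t)" by (cases p, cases q)
  have "exp x = exp y \<and> s = t"
    using eq mob_eq_imp[of 0 0 "exp x" "- 1 / exp x" 0 0 "exp y" "- 1 / exp y"]
      mob_eq_imp[of 0 0 "exp x" "- 1 / exp x" "exp y" "1 / exp y" 0 0]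
      mob_eq_imp[of "exp x" "1 / exp x" 0 0 0 0 "exp y" "- 1 / exp y"]
      mob_eq_imp[of "exp x" "1 / exp x" 0 0 "exp y" "1 / exp y" 0 0]
      exp_gt_zero[of x] exp_gt_zero[of y]
    by (cases s; cases t) (auto simp: pq diag_normalizer_def)
  then show "p = q" by (simp add: pq)
qed

lemma mirror_fixed_imp_diag_normalizer:
  assumes "g \<in> PSL2R" "mirror g = g"
  shows "g \<in> range diag_normalizer"
proof -
  obtain a b c d where det: "a * d - b * c = 1" and g: "g = mob a b c d"
    using assms(1) by (rule PSL2RE)
  have "a * d - (-b) * (-c) = 1" using det by simp
  moreover have "mob a (-b) (-c) d = mob a b c d" using assms(2) g by (simp add: mirror_mob)
  ultimately have "(b = 0 \<and> c = 0) \<or> (a = 0 \<and> d = 0)"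
    using mob_eq_imp[OF _ det] by fastforce
  then consider "b = 0" "c = 0" "d = 1 / a" "a \<noteq> 0" | "a = 0" "d = 0" "c = - 1 / b" "b \<noteq> 0"
    using det by (force simp: field_simps)
  then show ?thesis
  proof cases
    case 1
    then have "g = diag_normalizer (ln \<bar>a\<bar>, False)"
      using mob_minus[of a 0 0 d] by (cases "0 < a") (auto simp: g diag_normalizer_def)
    then show ?thesis by blast
  next
    case 2
    then have "g = diag_normalizer (ln \<bar>b\<bar>, True)"
      using mob_minus[of 0 b c 0] by (cases "0 < b") (auto simp: g diag_normalizer_def)
    then show ?thesis by blast
  qed
qed

definition conj_diag_normalizer :: "(complex \<Rightarrow> complex) \<Rightarrow> real \<times> bool \<Rightarrow> complex \<Rightarrow> complex" where
  "conj_diag_normalizer k p = k \<circ> diag_normalizer p \<circ> inv\<^bsub>PSL2R_group\<^esub> k"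

lemma conj_diag_normalizer_hom:
  assumes "k \<in> PSL2R"
  shows "conj_diag_normalizer k \<in> hom real_dihedral_group PSL2R_group"
proof -
  have cancel: "inv\<^bsub>PSL2R_group\<^esub> k \<circ> (k \<circ> h) = h" for h
    using PSL2R.l_inv assms by (simp flip: comp_assoc)
  show ?thesis
    using assms PSL2R.inv_closed[of k]
    by (intro homI) (simp_all add: conj_diag_normalizer_def comp_in_PSL2R diag_normalizer_in_PSL2R
        diag_normalizer_mult [symmetric] comp_assoc cancel)
qed

lemma inj_conj_diag_normalizer:
  assumes "k \<in> PSL2R"
  shows "inj (conj_diag_normalizer k)"
proof (rule injI)
  fix p q
  assume "conj_diag_normalizer k p = conj_diag_normalizer k q"
  moreover have cancel: "inv\<^bsub>PSL2R_group\<^esub> k \<circ> (k \<circ> h) = h" "inv\<^bsub>PSL2R_group\<^esub> k \<circ> k = id" for h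
    using PSL2R.l_inv assms by (simp_all flip: comp_assoc)
  ultimately have "diag_normalizer p = diag_normalizer q"
    using PSL2R.inv_conj_eq_iff[of k "conj_diag_normalizer k q" "diag_normalizer p"]
      PSL2R.inv_closed[of k] assms diag_normalizer_in_PSL2R
    by (simp add: conj_diag_normalizer_def comp_in_PSL2R comp_assoc cancel)
  then show "p = q" using inj_diag_normalizer by (simp add: inj_eq)
qed

lemma mirror_fixed_iff: "g \<in> PSL2R \<Longrightarrow> mirror g = g \<longleftrightarrow> g \<in> range diag_normalizer"
  using mirror_fixed_imp_diag_normalizer mirror_diag_normalizer by blast

lemma admissible_mirror_cocycle:
  assumes f: "f \<in> PSL2R" "mirror f = inv\<^bsub>PSL2R_group\<^esub> f" and \<gamma>: "\<gamma> \<in> PSL2R"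
    and "inv\<^bsub>PSL2R_group\<^esub> f \<circ> mirror \<gamma> \<circ> f = inv\<^bsub>PSL2R_group\<^esub> \<gamma>"
  shows "mirror (f \<circ> \<gamma>) \<circ> (f \<circ> \<gamma>) = id"
proof -
  have "mirror (f \<circ> \<gamma>) \<circ> (f \<circ> \<gamma>) = inv\<^bsub>PSL2R_group\<^esub> \<gamma> \<circ> \<gamma>"
    using assms by (simp add: mirror_comp o_assoc)
  also have "\<dots> = id" using PSL2R.l_inv \<gamma> by simp
  finally show ?thesis .
qed

lemma twisted_centralizer_eq_conj_diag_normalizer:
  assumes c: "complex_conjugation c" and \<Gamma>: "\<Gamma> \<subseteq> PSL2R" and \<gamma>: "\<gamma> \<in> PSL2R"
    and adm: "admissible c \<gamma>"
  obtains k where "k \<in> PSL2R"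
    "twisted_centralizer \<Gamma> c \<gamma> = \<Gamma> \<inter> range (conj_diag_normalizer k)"
proof -
  interpret mirror: group_hom PSL2R_group PSL2R_group mirror
    by (simp add: group_hom_def group_hom_axioms_def group_PSL2R mirror_hom)
  obtain f where f: "f \<in> PSL2R" "mirror f = inv\<^bsub>PSL2R_group\<^esub> f"
    and twist: "\<And>g. g \<in> PSL2R \<Longrightarrow> twist c g = inv\<^bsub>PSL2R_group\<^esub> f \<circ> mirror g \<circ> f"
    using complex_conjugation_twist[OF c] by blast
  define \<eta> where "\<eta> = f \<circ> \<gamma>"
  have \<eta>: "\<eta> \<in> PSL2R" using f \<gamma> by (simp add: \<eta>_def comp_in_PSL2R)
  have "inv\<^bsub>PSL2R_group\<^esub> f \<circ> mirror \<gamma> \<circ> f = inv\<^bsub>PSL2R_group\<^esub> \<gamma>"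
    using adm twist[OF \<gamma>] by (simp add: admissible_def)
  then have "mirror \<eta> \<circ> \<eta> = id"
    unfolding \<eta>_def by (rule admissible_mirror_cocycle[OF f \<gamma>])
  then obtain k where k: "k \<in> PSL2R" "\<eta> = mirror k \<circ> inv\<^bsub>PSL2R_group\<^esub> k"
    using mirror_cocycle_eq_coboundary[OF \<eta>] by blast
  have "\<sigma> \<in> twisted_centralizer \<Gamma> c \<gamma> \<longleftrightarrow> \<sigma> \<in> \<Gamma> \<and> \<sigma> \<in> range (conj_diag_normalizer k)" for \<sigma>
  proof (cases "\<sigma> \<in> \<Gamma>")
    case True
    then have \<sigma>: "\<sigma> \<in> PSL2R" using \<Gamma> by blast
    have "\<sigma> \<in> twisted_centralizer \<Gamma> c \<gamma> \<longleftrightarrow> mirror \<sigma> \<circ> \<eta> = \<eta> \<circ> \<sigma>"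
      using PSL2R.twisted_conj_eq_iff[of f \<gamma> \<sigma> "mirror \<sigma>"] True twist[OF \<sigma>] f \<gamma> \<sigma>
      by (simp add: twisted_centralizer_def \<eta>_def mirror_in_PSL2R o_assoc)
    also have "\<dots> \<longleftrightarrow> mirror (inv\<^bsub>PSL2R_group\<^esub> k \<circ> \<sigma> \<circ> k) = inv\<^bsub>PSL2R_group\<^esub> k \<circ> \<sigma> \<circ> k"
      using PSL2R.commute_coboundary_iff[of k \<sigma> "mirror \<sigma>" "mirror k"] k \<sigma>
      by (simp add: mirror_in_PSL2R mirror_comp comp_in_PSL2R o_assoc)
    also have "\<dots> \<longleftrightarrow> inv\<^bsub>PSL2R_group\<^esub> k \<circ> \<sigma> \<circ> k \<in> range diag_normalizer"
      using k \<sigma> PSL2R.inv_closed[of k] by (simp add: mirror_fixed_iff comp_in_PSL2R)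
    also have "\<dots> \<longleftrightarrow> \<sigma> \<in> range (conj_diag_normalizer k)"
      using k \<sigma> PSL2R.inv_conj_eq_iff[of k \<sigma>] diag_normalizer_in_PSL2R
      by (auto simp: conj_diag_normalizer_def)
    finally show ?thesis using True by simp
  qed (simp add: twisted_centralizer_def)
  then show ?thesis using that k(1) by blast
qed

subsection \<open>Discrete subgroups of the isometry group of the line\<close>

lemma iso_of_inj_hom_onto:
  assumes "group G" "h \<in> hom G K" "inj_on h (carrier G)" "h ` carrier G = H"
  shows "K\<lparr>carrier := H\<rparr> \<cong> G"
proof -
  have "h \<in> iso G (K\<lparr>carrier := H\<rparr>)"
    using assms(2-4) by (auto simp: iso_def hom_def bij_betw_def)
  then show ?thesis by (rule group.iso_sym[OF assms(1) is_isoI])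
qed

lemma real_dihedral_two_element_iso:
  "real_dihedral_group\<lparr>carrier := {(0, False), (u, True)}\<rparr> \<cong> integer_mod_group 2"
proof (rule iso_of_inj_hom_onto)
  let ?h = "\<lambda>n::int. if n = 0 then (0, False) else (u, True)"
  have "{0..<2::int} = {0, 1}" by auto
  then show "?h \<in> hom (integer_mod_group 2) real_dihedral_group"
    "inj_on ?h (carrier (integer_mod_group 2))"
    "?h ` carrier (integer_mod_group 2) = {(0, False), (u, True)}"
    by (auto simp: carrier_integer_mod_group hom_def inj_on_def)
qed simp

lemma real_dihedral_translations_iso:
  assumes "a \<noteq> 0"
  shows "real_dihedral_group\<lparr>carrier := range (\<lambda>n::int. (of_int n * a, False))\<rparr> \<cong> integer_group"
  by (rule iso_of_inj_hom_onto[OF group_integer_group])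
    (use assms in \<open>auto simp: integer_group_def hom_def inj_on_def distrib_right\<close>)

lemma real_dihedral_inf_dihedral_iso:
  assumes "a \<noteq> 0"
  shows "real_dihedral_group\<lparr>carrier :=
      range (\<lambda>(n::int, b). (of_int n * a + (if b then u else 0), b))\<rparr> \<cong> inf_dihedral_group"
proof (rule iso_of_inj_hom_onto)
  show "group inf_dihedral_group"
  proof (rule groupI)
    fix x :: "int \<times> bool"
    show "\<exists>y\<in>carrier inf_dihedral_group. y \<otimes>\<^bsub>inf_dihedral_group\<^esub> x = \<one>\<^bsub>inf_dihedral_group\<^esub>"
    proof (cases x)
      case (Pair n s)
      show ?thesis
        by (rule bexI[of _ "if s then (n, True) else (- n, False)"]) (auto simp: Pair inf_dihedral_group_def)
    qed
  qed (auto simp: inf_dihedral_group_def)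
qed (use assms in \<open>auto simp: inf_dihedral_group_def hom_def inj_on_def algebra_simps\<close>)

lemma discrete_additive_subgroup_real:
  fixes L :: "real set"
  assumes zero: "0 \<in> L" and add: "\<And>x y. x \<in> L \<Longrightarrow> y \<in> L \<Longrightarrow> x + y \<in> L"
    and neg: "\<And>x. x \<in> L \<Longrightarrow> -x \<in> L"
    and "0 < \<delta>" and discrete: "\<And>x. x \<in> L \<Longrightarrow> \<bar>x\<bar> < \<delta> \<Longrightarrow> x = 0"
  shows "L = {0} \<or> (\<exists>a>0. L = range (\<lambda>n::int. of_int n * a))"
proof (cases "L = {0}")
  case False
  then obtain x where x: "x \<in> L" "x \<noteq> 0" using zero by blast
  define P where "P = {y \<in> L. 0 < y}"
  have "\<bar>x\<bar> \<in> P" using x neg[of x] by (auto simp: P_def abs_if)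
  then have "P \<noteq> {}" by blast
  have P_ge: "\<delta> \<le> y" if "y \<in> P" for y
    using discrete[of y] that by (force simp: P_def)
  then have "bdd_below P" by (auto simp: bdd_below_def)
  define a where "a = Inf P"
  have "\<delta> \<le> a" unfolding a_def using P_ge \<open>P \<noteq> {}\<close> by (intro cInf_greatest) auto
  then have "0 < a" using \<open>0 < \<delta>\<close> by simp
  have a_le: "a \<le> y" if "y \<in> P" for y unfolding a_def using \<open>bdd_below P\<close> that by (rule cInf_lower[rotated])
  txt \<open>Two elements of \<open>P\<close> within \<open>\<delta>\<close> of the infimum would differ by less than \<open>\<delta>\<close>.\<close>
  have "a \<in> P"
  proof (rule ccontr)
    assume "a \<notin> P"
    obtain p1 where p1: "p1 \<in> P" "p1 < a + \<delta>"
      using cInf_lessD[OF \<open>P \<noteq> {}\<close>, of "a + \<delta>"] \<open>0 < \<delta>\<close> by (auto simp: a_def)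
    then have "Inf P < p1" using a_le[OF p1(1)] \<open>a \<notin> P\<close> by (metis a_def order_le_less)
    then obtain p2 where p2: "p2 \<in> P" "p2 < p1" using cInf_lessD[OF \<open>P \<noteq> {}\<close>] by blast
    have "p1 + - p2 \<in> L" using add[OF _ neg] p1(1) p2(1) by (auto simp: P_def)
    moreover have "\<bar>p1 + - p2\<bar> < \<delta>" using p1 p2 a_le[OF p2(1)] by simp
    ultimately show False using discrete p2 by fastforce
  qed
  then have "a \<in> L" by (simp add: P_def)
  have mult_in: "of_int n * a \<in> L" for n :: int
  proof -
    have nat: "of_nat m * a \<in> L" for m :: nat
      by (induction m) (auto simp: zero algebra_simps intro: add[OF \<open>a \<in> L\<close>])
    show ?thesis
    proof (cases "0 \<le> n")
      case True
      then show ?thesis using nat[of "nat n"] by simp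
    next
      case False
      then have "of_int n * a = - (of_nat (nat (- n)) * a)" by simp
      then show ?thesis using neg[OF nat[of "nat (- n)"]] by simp
    qed
  qed
  have "y \<in> range (\<lambda>n::int. of_int n * a)" if "y \<in> L" for y
  proof -
    define n where "n = \<lfloor>y / a\<rfloor>"
    have "of_int n * a \<le> y"
      using \<open>0 < a\<close> unfolding n_def by (metis floor_divide_lower)
    have "y / a < of_int n + 1" unfolding n_def by linarith
    then have "y - of_int n * a < a" using \<open>0 < a\<close> by (simp add: divide_less_eq algebra_simps)
    moreover have "y + - (of_int n * a) \<in> L" using add[OF that neg[OF mult_in]] .
    ultimately have "y - of_int n * a \<notin> P" using a_le by force
    then have "y = of_int n * a"
      using \<open>y + - (of_int n * a) \<in> L\<close> \<open>of_int n * a \<le> y\<close> by (auto simp: P_def)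
    then show ?thesis by blast
  qed
  then have "L = range (\<lambda>n::int. of_int n * a)" using mult_in by blast
  then show ?thesis using \<open>0 < a\<close> by blast
qed simp

lemma real_dihedral_discrete_subgroup_cases:
  assumes H: "subgroup H real_dihedral_group"
    and "\<exists>\<delta>>0. \<forall>x. (x, False) \<in> H \<and> \<bar>x\<bar> < \<delta> \<longrightarrow> x = 0"
  shows "H = {(0, False)} \<or>
         real_dihedral_group\<lparr>carrier := H\<rparr> \<cong> integer_mod_group 2 \<or>
         real_dihedral_group\<lparr>carrier := H\<rparr> \<cong> integer_group \<or>
         real_dihedral_group\<lparr>carrier := H\<rparr> \<cong> inf_dihedral_group"
proof -
  interpret RD: group real_dihedral_group by (rule group_real_dihedral)
  obtain \<delta> where "0 < \<delta>" and discrete: "\<And>x. (x, False) \<in> H \<Longrightarrow> \<bar>x\<bar> < \<delta> \<Longrightarrow> x = 0"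
    using assms(2) by blast
  define L where "L = {x. (x, False) \<in> H}"
  have mult: "(x, s) \<otimes>\<^bsub>real_dihedral_group\<^esub> (y, t) \<in> H" if "(x, s) \<in> H" "(y, t) \<in> H" for x y s t
    using subgroup.m_closed[OF H that] .
  have "inv\<^bsub>real_dihedral_group\<^esub> (x, False) = (- x, False)" for x
    by (rule RD.inv_equality) auto
  then have neg: "- x \<in> L" if "x \<in> L" for x
    using subgroup.m_inv_closed[OF H, of "(x, False)"] that by (simp add: L_def)
  have "0 \<in> L" using subgroup.one_closed[OF H] by (simp add: L_def)
  moreover have "x + y \<in> L" if "x \<in> L" "y \<in> L" for x y
    using mult[of x False y False] that by (simp add: L_def)
  ultimately have L_cases: "L = {0} \<or> (\<exists>a>0. L = range (\<lambda>n::int. of_int n * a))"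
    using discrete_additive_subgroup_real[OF _ _ neg \<open>0 < \<delta>\<close>] discrete by (simp add: L_def)
  show ?thesis
  proof (cases "\<exists>u. (u, True) \<in> H")
    case False
    then have "H = (\<lambda>x. (x, False)) ` L" by (auto simp: L_def image_iff) (metis (full_types) prod.exhaust)
    with L_cases show ?thesis
      using real_dihedral_translations_iso by (force simp: image_image)
  next
    case True
    then obtain u where u: "(u, True) \<in> H" by blast
    have "(v, True) \<in> H \<longleftrightarrow> v - u \<in> L" for v
      using mult[OF _ u, of v True] mult[OF _ u, of "v - u" False] by (auto simp: L_def)
    then have H_eq: "H = (\<lambda>(x, b). (x + (if b then u else 0), b)) ` (L \<times> UNIV)"
      by (auto simp: L_def image_iff split: prod.splits) (metis (full_types) add.commute diff_add_cancel)
    from L_cases show ?thesis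
    proof
      assume "L = {0}"
      then have "H = {(0, False), (u, True)}"
        by (auto simp: H_eq intro: rev_image_eqI[of "(0, False)"] rev_image_eqI[of "(0, True)"])
      then show ?thesis using real_dihedral_two_element_iso by blast
    next
      assume "\<exists>a>0. L = range (\<lambda>n::int. of_int n * a)"
      then obtain a where "0 < a" "L = range (\<lambda>n::int. of_int n * a)" by blast
      then have "H = range (\<lambda>(n::int, b). (of_int n * a + (if b then u else 0), b))"
        by (auto simp: H_eq image_iff)
      then show ?thesis using real_dihedral_inf_dihedral_iso \<open>0 < a\<close> by simp
    qed
  qed
qed

lemma (in group_hom) subgroup_vimage:
  assumes "subgroup K H"
  shows "subgroup (carrier G \<inter> h -` K) G"
  using subgroup.m_closed[OF assms] subgroup.one_closed[OF assms] subgroup.m_inv_closed[OF assms]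
  by unfold_locales auto

lemma iso_image_subgroup:
  assumes "group G" "h \<in> hom G K" "inj_on h (carrier G)" "subgroup H G"
  shows "K\<lparr>carrier := h ` H\<rparr> \<cong> G\<lparr>carrier := H\<rparr>"
  using assms subgroup.subset[OF assms(4)]
  by (intro iso_of_inj_hom_onto) (auto simp: subgroup.subgroup_is_group hom_def inj_on_subset)

subsection \<open>Discreteness\<close>

lemma discrete_psl_near_id:
  fixes a b c d :: "real \<Rightarrow> real"
  assumes "discrete_psl \<Gamma>" and cont: "isCont a 0" "isCont b 0" "isCont c 0" "isCont d 0"
    and at0: "a 0 = 1" "b 0 = 0" "c 0 = 0" "d 0 = 1" and det: "\<And>x. a x * d x - b x * c x = 1"
  shows "\<exists>\<delta>>0. \<forall>x. \<bar>x\<bar> < \<delta> \<and> mob (a x) (b x) (c x) (d x) \<in> \<Gamma> \<longrightarrow> mob (a x) (b x) (c x) (d x) = id"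
proof -
  obtain \<epsilon> where "0 < \<epsilon>" and \<epsilon>: "\<And>a b c d. a * d - b * c = 1 \<and> mob a b c d \<in> \<Gamma> \<and>
      \<bar>a - 1\<bar> < \<epsilon> \<and> \<bar>b\<bar> < \<epsilon> \<and> \<bar>c\<bar> < \<epsilon> \<and> \<bar>d - 1\<bar> < \<epsilon> \<Longrightarrow> mob a b c d = id"
    using assms(1) unfolding discrete_psl_def by blast
  have near: "\<forall>\<^sub>F x in nhds 0. dist (f x) (f 0) < \<epsilon>" if "isCont f 0" for f :: "real \<Rightarrow> real"
    using that \<open>0 < \<epsilon>\<close> by (simp add: isCont_def tendsto_at_iff_tendsto_nhds tendstoD)
  have "\<forall>\<^sub>F x in nhds 0. \<bar>a x - 1\<bar> < \<epsilon> \<and> \<bar>b x\<bar> < \<epsilon> \<and> \<bar>c x\<bar> < \<epsilon> \<and> \<bar>d x - 1\<bar> < \<epsilon>"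
    using eventually_conj[OF near[OF cont(1)] eventually_conj[OF near[OF cont(2)]
        eventually_conj[OF near[OF cont(3)] near[OF cont(4)]]]]
    by (simp add: at0 dist_real_def)
  then show ?thesis
    unfolding eventually_nhds_metric dist_real_def using \<epsilon> det by auto
qed

lemma discrete_conj_diag_normalizer:
  assumes "discrete_psl \<Gamma>" "k \<in> PSL2R"
  shows "\<exists>\<delta>>0. \<forall>x. \<bar>x\<bar> < \<delta> \<and> conj_diag_normalizer k (x, False) \<in> \<Gamma> \<longrightarrow> x = 0"
proof -
  obtain p q r s where det: "p * s - q * r = 1" and k: "k = mob p q r s"
    using assms(2) by (rule PSL2RE)
  define A B C D where "A x = p * s * exp x - q * r / exp x" and "B x = p * q / exp x - p * q * exp x"
    and "C x = r * s * exp x - r * s / exp x" and "D x = p * s / exp x - q * r * exp x" for x :: real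
  have detx: "A x * D x - B x * C x = 1" for x
  proof -
    have "A x * D x - B x * C x = (p * s - q * r) * (p * s - q * r)"
      by (simp add: A_def B_def C_def D_def field_simps)
    then show ?thesis using det by simp
  qed
  have conj: "conj_diag_normalizer k (x, False) = mob (A x) (B x) (C x) (D x)" for x
  proof -
    have d1: "exp x * (1 / exp x) - 0 * 0 = 1" by simp
    have d2: "(p * exp x + q * 0) * (r * 0 + s * (1 / exp x)) - (p * 0 + q * (1 / exp x)) * (r * exp x + s * 0) = 1"
      using det by (simp add: field_simps)
    have d3: "s * p - (-q) * (-r) = 1" using det by (simp add: algebra_simps)
    show ?thesis
      unfolding k conj_diag_normalizer_def diag_normalizer_def inv_mob[OF det]
      using mob_comp[OF det d1] mob_comp[OF d2 d3]
      by (simp add: A_def B_def C_def D_def algebra_simps)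
  qed
  have "isCont A 0" "isCont B 0" "isCont C 0" "isCont D 0"
    unfolding A_def[abs_def] B_def[abs_def] C_def[abs_def] D_def[abs_def]
    by (intro continuous_intros; simp)+
  moreover have "A 0 = 1" "B 0 = 0" "C 0 = 0" "D 0 = 1"
    using det by (simp_all add: A_def B_def C_def D_def)
  ultimately obtain \<delta> where "0 < \<delta>"
    and \<delta>: "\<And>x. \<bar>x\<bar> < \<delta> \<Longrightarrow> mob (A x) (B x) (C x) (D x) \<in> \<Gamma> \<Longrightarrow> mob (A x) (B x) (C x) (D x) = id"
    using discrete_psl_near_id[of \<Gamma> A B C D, OF assms(1)] detx by blast
  have "x = 0" if "\<bar>x\<bar> < \<delta>" "conj_diag_normalizer k (x, False) \<in> \<Gamma>" for x
  proof -
    have "conj_diag_normalizer k (x, False) = id"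
      using \<delta>[OF that(1)] that(2) by (simp add: conj)
    then have "diag_normalizer (x, False) = id"
      using PSL2R.inv_conj_eq_iff[of k id "diag_normalizer (x, False)"] PSL2R.l_inv[of k] assms(2)
        diag_normalizer_in_PSL2R id_in_PSL2R
      by (simp add: conj_diag_normalizer_def eq_commute[of id])
    also have "id = diag_normalizer (0, False)" by (simp add: diag_normalizer_def mob_id)
    finally show ?thesis using inj_diag_normalizer by (simp add: inj_eq)
  qed
  then show ?thesis using \<open>0 < \<delta>\<close> by blast
qed

lemma discrete_subgroup_inter_conj_diag_normalizer:
  assumes \<Gamma>: "subgroup \<Gamma> PSL2R_group" "discrete_psl \<Gamma>" and k: "k \<in> PSL2R"
  defines "Z \<equiv> \<Gamma> \<inter> range (conj_diag_normalizer k)"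
  shows "Z = {id} \<or> PSL2R_group\<lparr>carrier := Z\<rparr> \<cong> integer_mod_group 2 \<or>
         PSL2R_group\<lparr>carrier := Z\<rparr> \<cong> integer_group \<or> PSL2R_group\<lparr>carrier := Z\<rparr> \<cong> inf_dihedral_group"
proof -
  interpret \<Phi>: group_hom real_dihedral_group PSL2R_group "conj_diag_normalizer k"
    using conj_diag_normalizer_hom[OF k] group_real_dihedral group_PSL2R
    by (simp add: group_hom_def group_hom_axioms_def)
  define H where "H = conj_diag_normalizer k -` \<Gamma>"
  have H: "subgroup H real_dihedral_group" using \<Phi>.subgroup_vimage[OF \<Gamma>(1)] by (simp add: H_def)
  have Z: "Z = conj_diag_normalizer k ` H" by (auto simp: Z_def H_def)
  have iso: "PSL2R_group\<lparr>carrier := Z\<rparr> \<cong> real_dihedral_group\<lparr>carrier := H\<rparr>"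
    unfolding Z using iso_image_subgroup[OF group_real_dihedral \<Phi>.homh _ H] inj_conj_diag_normalizer[OF k]
    by simp
  have "\<exists>\<delta>>0. \<forall>x. (x, False) \<in> H \<and> \<bar>x\<bar> < \<delta> \<longrightarrow> x = 0"
    using discrete_conj_diag_normalizer[OF \<Gamma>(2) k] by (simp add: H_def conj_commute)
  from real_dihedral_discrete_subgroup_cases[OF H this] show ?thesis
  proof (elim disjE)
    assume "H = {(0, False)}"
    then show ?thesis using Z \<Phi>.hom_one by simp
  qed (use iso iso_trans in auto)
qed

theorem lemma3p6:
  fixes \<Gamma> :: "(complex \<Rightarrow> complex) set" and c \<gamma> :: "complex \<Rightarrow> complex"
  assumes "real_fuchsian \<Gamma> c" and "\<gamma> \<in> \<Gamma>" and "admissible c \<gamma>"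
  shows "twisted_centralizer \<Gamma> c \<gamma> = {id} \<or>
         PSL2R_group\<lparr>carrier := twisted_centralizer \<Gamma> c \<gamma>\<rparr> \<cong> integer_mod_group 2 \<or>
         PSL2R_group\<lparr>carrier := twisted_centralizer \<Gamma> c \<gamma>\<rparr> \<cong> integer_group \<or>
         PSL2R_group\<lparr>carrier := twisted_centralizer \<Gamma> c \<gamma>\<rparr> \<cong> inf_dihedral_group"
proof -
  have \<Gamma>: "subgroup \<Gamma> PSL2R_group" "discrete_psl \<Gamma>" and c: "complex_conjugation c"
    using assms(1) unfolding real_fuchsian_def by auto
  then have "\<Gamma> \<subseteq> PSL2R" using subgroup.subset by fastforce
  then obtain k where "k \<in> PSL2R" "twisted_centralizer \<Gamma> c \<gamma> = \<Gamma> \<inter> range (conj_diag_normalizer k)"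
    using twisted_centralizer_eq_conj_diag_normalizer[OF c] assms(2,3) by blast
  then show ?thesis using discrete_subgroup_inter_conj_diag_normalizer[OF \<Gamma>] by presburger
qed

end
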